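(* Let $\alpha,\beta\in\mathbb{C}$ with $\Re(\alpha)>-1$ and $\Re(\beta)>-1$, and let $n\geq 1$ be an integer. Then for all $w\in\mathbb{C}$ with $|w|<1$ and $w\notin(-1,0]$, $$\sqrt{w}\,\frac{\partial }{\partial w} P_{n}^{(\alpha ,\beta )} (1,w)+\frac{1+\alpha +\beta +n}{4}\, P_{n-1}^{(1+\alpha ,1+\beta )} (1,w)=0 .$$
   Context: For $\lambda\in\mathbb{C}$ and an integer $m\ge 0$, $(\lambda)_m$ denotes the Pochhammer symbol: $(\lambda)_0=1$ and $(\lambda)_m=\lambda(\lambda+1)\cdots(\lambda+m-1)$ for $m\ge1$. $\sqrt{w}$ denotes the principal branch of the square root. For $\alpha,\beta\in\mathbb{C}$ with $\Re(\alpha)>-1$, $\Re(\beta)>-1$ and an integer $n\ge 0$, set $$P_{n}^{(\alpha ,\beta )} (1,w)=\sum _{k=0}^{n} \frac{(1+\alpha)_{n}\, (1+\alpha +\beta)_{n+k}}{k!\,(n-k)!\,(1+\alpha)_{k}\, (1+\alpha +\beta)_{n} } \left(\frac{1-\sqrt{w} }{2} \right)^{k},$$ where the quotient $(1+\alpha+\beta)_{n+k}/(1+\alpha+\beta)_n$ is understood as $(1+\alpha+\beta+n)_k$. The symbol $P_{n-1}^{(1+\alpha ,1+\beta )}(1,w)$ denotes the same polynomial with parameters $\alpha,\beta$ replaced by $1+\alpha,1+\beta$ and degree index $n-1$. *)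

theory Defs
  imports "HOL-Analysis.Analysis"
begin

text \<open>The polynomial P_n^(alpha,beta)(1,w) of the paper, with the principal square root csqrt.
  The quotient (1+alpha+beta)_(n+k)/(1+alpha+beta)_n is (1+alpha+beta+n)_k.\<close>
definition jacP :: "nat \<Rightarrow> complex \<Rightarrow> complex \<Rightarrow> complex \<Rightarrow> complex" where
  "jacP n \<alpha> \<beta> w =
     (\<Sum>k=0..n. pochhammer (1 + \<alpha>) n * pochhammer (1 + \<alpha> + \<beta> + of_nat n) k
        / (of_nat (fact k) * of_nat (fact (n - k)) * pochhammer (1 + \<alpha>) k)
        * ((1 - csqrt w) / 2) ^ k)"

end

theory Submission
  imports Defs
begin

text \<open>In the variable \<open>s = (1 - csqrt w) / 2\<close>, \<open>jacP n \<alpha> \<beta> w\<close> is a polynomial of degree \<open>n\<close>,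
  and differentiating it termwise gives \<open>1 + \<alpha> + \<beta> + n\<close> times the polynomial of degree \<open>n - 1\<close>
  with parameters \<open>1 + \<alpha>, 1 + \<beta>\<close>, by a coefficientwise identity of Pochhammer symbols.
  Off the branch cut \<open>ds/dw = -1 / (4 csqrt w)\<close>, so the factor \<open>csqrt w\<close> cancels.\<close>

definition jac_coeff :: "nat \<Rightarrow> 'a \<Rightarrow> 'a \<Rightarrow> nat \<Rightarrow> 'a :: field_char_0" where
  "jac_coeff n \<alpha> \<beta> k = pochhammer (1 + \<alpha>) n * pochhammer (1 + \<alpha> + \<beta> + of_nat n) k
     / (of_nat (fact k) * of_nat (fact (n - k)) * pochhammer (1 + \<alpha>) k)"

lemma jac_coeff_Suc:
  fixes \<alpha> \<beta> :: "'a :: field_char_0"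
  assumes "1 + \<alpha> \<noteq> 0"
  shows "of_nat (Suc k) * jac_coeff (Suc m) \<alpha> \<beta> (Suc k)
           = (1 + \<alpha> + \<beta> + of_nat (Suc m)) * jac_coeff m (1 + \<alpha>) (1 + \<beta>) k"
proof -
  have cancel: "s * (a * p * (c * q) / (s * f * g * (a * r))) = c * (p * q / (f * g * r))"
    if "a \<noteq> 0" "s \<noteq> 0" for a s p c q f g r :: 'a
    using that by (simp add: field_simps)
  have "1 + \<alpha> + 1 = 1 + (1 + \<alpha>)"
    and "1 + \<alpha> + \<beta> + of_nat (Suc m) + 1 = 1 + (1 + \<alpha>) + (1 + \<beta>) + of_nat m"
    and "(of_nat (fact (Suc k)) :: 'a) = of_nat (Suc k) * of_nat (fact k)"
    by (simp_all add: algebra_simps)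
  then show ?thesis
    unfolding jac_coeff_def pochhammer_rec diff_Suc_Suc
    by (simp only: cancel[OF assms of_nat_neq_0])
qed

definition jac_poly :: "nat \<Rightarrow> 'a \<Rightarrow> 'a \<Rightarrow> 'a \<Rightarrow> 'a :: field_char_0" where
  "jac_poly n \<alpha> \<beta> s = (\<Sum>k=0..n. jac_coeff n \<alpha> \<beta> k * s ^ k)"

lemma jacP_eq_jac_poly: "jacP n \<alpha> \<beta> w = jac_poly n \<alpha> \<beta> ((1 - csqrt w) / 2)"
  by (simp add: jacP_def jac_poly_def jac_coeff_def)

lemma jac_poly_has_derivative:
  fixes \<alpha> \<beta> s :: "'a :: real_normed_field"
  assumes "1 + \<alpha> \<noteq> 0"
  shows "(jac_poly (Suc m) \<alpha> \<beta> has_field_derivative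
           (1 + \<alpha> + \<beta> + of_nat (Suc m)) * jac_poly m (1 + \<alpha>) (1 + \<beta>) s) (at s)"
proof -
  have "(jac_poly (Suc m) \<alpha> \<beta> has_field_derivative
          (\<Sum>k=0..Suc m. jac_coeff (Suc m) \<alpha> \<beta> k * (of_nat k * s ^ (k - 1)))) (at s)"
    unfolding jac_poly_def[abs_def]
    by (intro DERIV_sum DERIV_cmult) (use DERIV_power[OF DERIV_ident] in simp)
  also have "(\<Sum>k=0..Suc m. jac_coeff (Suc m) \<alpha> \<beta> k * (of_nat k * s ^ (k - 1)))
           = (\<Sum>k=0..m. of_nat (Suc k) * jac_coeff (Suc m) \<alpha> \<beta> (Suc k) * s ^ k)"
    by (subst sum.atLeast0_atMost_Suc_shift) (simp add: mult_ac)
  also have "\<dots> = (\<Sum>k=0..m. (1 + \<alpha> + \<beta> + of_nat (Suc m))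
                              * jac_coeff m (1 + \<alpha>) (1 + \<beta>) k * s ^ k)"
    by (simp only: jac_coeff_Suc[OF assms])
  also have "\<dots> = (1 + \<alpha> + \<beta> + of_nat (Suc m)) * jac_poly m (1 + \<alpha>) (1 + \<beta>) s"
    by (simp only: jac_poly_def sum_distrib_left mult.assoc)
  finally show ?thesis .
qed

lemma jacP_has_derivative:
  fixes \<alpha> \<beta> w :: complex
  assumes "1 + \<alpha> \<noteq> 0" and "w \<notin> \<real>\<^sub>\<le>\<^sub>0"
  shows "(jacP (Suc m) \<alpha> \<beta> has_field_derivative
           - (1 + \<alpha> + \<beta> + of_nat (Suc m)) / (4 * csqrt w) * jacP m (1 + \<alpha>) (1 + \<beta>) w) (at w)"
proof -
  have "((\<lambda>z. (1 - csqrt z) / 2) has_field_derivative (0 - inverse (2 * csqrt w)) / 2) (at w)"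
    by (intro DERIV_cdivide DERIV_diff DERIV_const has_field_derivative_csqrt assms(2))
  moreover have "c * p * ((0 - inverse (2 * q)) / 2) = - c / (4 * q) * p" for c p q :: complex
    by (cases "q = 0") (simp_all add: field_simps)
  ultimately show ?thesis
    unfolding jacP_eq_jac_poly[abs_def]
    using DERIV_chain2[OF jac_poly_has_derivative[OF assms(1)]] by metis
qed

theorem mainTheorem3:
  fixes \<alpha> \<beta> w :: complex and n :: nat
  assumes "Re \<alpha> > -1" and "Re \<beta> > -1" and "n \<ge> 1"
    and "norm w < 1" and "w \<notin> complex_of_real ` {-1<..0}"
  shows "csqrt w * deriv (\<lambda>z. jacP n \<alpha> \<beta> z) w
           + (1 + \<alpha> + \<beta> + of_nat n) / 4 * jacP (n - 1) (1 + \<alpha>) (1 + \<beta>) w = 0"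
proof -
  have "1 + \<alpha> \<noteq> 0"
    using assms(1) by (auto simp: complex_eq_iff)
  have "w \<notin> \<real>\<^sub>\<le>\<^sub>0"
    using assms(4,5) by (auto elim!: nonpos_Reals_cases)
  then have "csqrt w \<noteq> 0"
    by auto
  obtain m where n: "n = Suc m"
    using assms(3) by (cases n) auto
  have "deriv (\<lambda>z. jacP n \<alpha> \<beta> z) w
          = - (1 + \<alpha> + \<beta> + of_nat n) / (4 * csqrt w) * jacP (n - 1) (1 + \<alpha>) (1 + \<beta>) w"
    unfolding n using jacP_has_derivative[OF \<open>1 + \<alpha> \<noteq> 0\<close> \<open>w \<notin> \<real>\<^sub>\<le>\<^sub>0\<close>]
    by (simp add: DERIV_imp_deriv)
  with \<open>csqrt w \<noteq> 0\<close> show ?thesis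
    by (simp add: field_simps)
qed

end
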